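(* Let $\mathfrak{N}$ be a pseudo-Euclidean 2-step nilpotent Lie algebra with Ricci curvature $\mathfrak{r}$, and suppose there exists $\lambda\in\mathbb{R}$ such that $\mathfrak{r}=\lambda\langle\cdot,\cdot\rangle$. Then $\lambda=0$.
   Context: A pseudo-Euclidean Lie algebra is a finite-dimensional real Lie algebra with a nondegenerate symmetric bilinear form $\langle\cdot,\cdot\rangle$. It is 2-step nilpotent if $0\ne[\mathfrak{N},\mathfrak{N}]\subset\mathfrak{Z}$ (the center). The Levi-Civita product is defined by $2\langle\mathcal{D}_uv,w\rangle=\langle[u,v],w\rangle+\langle[w,u],v\rangle+\langle[w,v],u\rangle$, the curvature by $\mathcal{R}(u,v)w=\mathcal{D}_{[u,v]}w-\mathcal{D}_u\mathcal{D}_vw+\mathcal{D}_v\mathcal{D}_uw$, and the Ricci curvature by $\mathfrak{r}(u,v)=\mathrm{tr}(w\mapsto\mathcal{R}(u,w)v)$. *)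

theory Defs
  imports "HOL-Analysis.Analysis"
begin

text \<open>A finite-dimensional real Lie algebra is modelled on a finite-dimensional real
vector space (type class euclidean_space; its inner product is only used to
compute traces, which are basis independent) with a Lie bracket.\<close>

definition lie_algebra :: "('a::euclidean_space \<Rightarrow> 'a \<Rightarrow> 'a) \<Rightarrow> bool" where
  "lie_algebra br \<longleftrightarrow> bilinear br \<and> (\<forall>u. br u u = 0) \<and>
     (\<forall>u v w. br u (br v w) + br v (br w u) + br w (br u v) = 0)"

definition pseudo_euclidean_form :: "('a::euclidean_space \<Rightarrow> 'a \<Rightarrow> real) \<Rightarrow> bool" where
  "pseudo_euclidean_form g \<longleftrightarrow> bilinear g \<and> (\<forall>u v. g u v = g v u) \<and>
     (\<forall>u. (\<forall>v. g u v = 0) \<longrightarrow> u = 0)"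

definition center :: "('a::euclidean_space \<Rightarrow> 'a \<Rightarrow> 'a) \<Rightarrow> 'a set" where
  "center br = {z. \<forall>u. br z u = 0}"

definition two_step_nilpotent :: "('a::euclidean_space \<Rightarrow> 'a \<Rightarrow> 'a) \<Rightarrow> bool" where
  "two_step_nilpotent br \<longleftrightarrow> (\<exists>u v. br u v \<noteq> 0) \<and> (\<forall>u v. br u v \<in> center br)"

definition levi_civita :: "('a::euclidean_space \<Rightarrow> 'a \<Rightarrow> 'a) \<Rightarrow> ('a \<Rightarrow> 'a \<Rightarrow> real) \<Rightarrow> 'a \<Rightarrow> 'a \<Rightarrow> 'a" where
  "levi_civita br g u v = (THE x. \<forall>w. 2 * g x w = g (br u v) w + g (br w u) v + g (br w v) u)"

definition curvature :: "('a::euclidean_space \<Rightarrow> 'a \<Rightarrow> 'a) \<Rightarrow> ('a \<Rightarrow> 'a \<Rightarrow> real) \<Rightarrow> 'a \<Rightarrow> 'a \<Rightarrow> 'a \<Rightarrow> 'a" where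
  "curvature br g u v w =
     (let D = levi_civita br g in D (br u v) w - D u (D v w) + D v (D u w))"

definition trace_map :: "('a::euclidean_space \<Rightarrow> 'a) \<Rightarrow> real" where
  "trace_map f = (\<Sum>b\<in>Basis. inner (f b) b)"

definition ricci :: "('a::euclidean_space \<Rightarrow> 'a \<Rightarrow> 'a) \<Rightarrow> ('a \<Rightarrow> 'a \<Rightarrow> real) \<Rightarrow> 'a \<Rightarrow> 'a \<Rightarrow> real" where
  "ricci br g u v = trace_map (\<lambda>w. curvature br g u w v)"

end

theory Submission
  imports Defs
begin

text \<open>Let \<open>j(u)\<close> (\<open>jmap u\<close> below) be the metric adjoint of \<open>ad\<close>: \<open>\<langle>j(u) a, b\<rangle> = \<langle>u, [a,b]\<rangle>\<close>.
  In a 2-step nilpotent algebra \<open>D\<^sub>u v = ([u,v] - j(v) u - j(u) v)/2\<close>, and taking the trace of the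
  curvature gives \<open>ric(u,v) = -(Q(u,v) + Q(v,u) + T(u,v))/4\<close>, where \<open>Q(u,v) = tr(w \<mapsto> j([u,w]) v)\<close>
  and \<open>T(u,v) = tr(j(u) \<circ> j(v))\<close>. The form \<open>-T\<close> is represented by an operator \<open>\<Omega>\<close> with central
  image, and \<open>Q\<close> vanishes on central vectors, so \<open>ric(\<Omega> x, v) = \<langle>\<Omega>\<^sup>2 x, v\<rangle>/4\<close>. If \<open>ric = \<lambda>\<langle>\<cdot>,\<cdot>\<rangle>\<close>
  with \<open>\<lambda> \<noteq> 0\<close>, then \<open>\<Omega>/(4\<lambda>)\<close> is idempotent and so has nonnegative trace. But contracting with
  the dual basis gives \<open>\<Sum> Q(e\<^sub>i, e\<^sup>i) = tr \<Omega> = -\<Sum> T(e\<^sub>i, e\<^sup>i)\<close>, hence \<open>n\<lambda> = -tr \<Omega>/4\<close> and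
  \<open>tr(\<Omega>/(4\<lambda>)) = -n\<close>. The argument never uses that the bracket is nonzero.\<close>

lemma trace_map_add: "trace_map (\<lambda>w. f w + h w) = trace_map f + trace_map h"
  by (simp add: trace_map_def inner_add_left sum.distrib)

lemma trace_map_diff: "trace_map (\<lambda>w. f w - h w) = trace_map f - trace_map h"
  by (simp add: trace_map_def inner_diff_left sum_subtractf)

lemma trace_map_scaleR: "trace_map (\<lambda>w. c *\<^sub>R f w) = c * trace_map f"
  by (simp add: trace_map_def sum_distrib_left)

lemma trace_map_neg: "trace_map (\<lambda>w. - f w) = - trace_map f"
  by (simp add: trace_map_def sum_negf)

lemma trace_map_zero: "trace_map (\<lambda>w. 0) = 0"
  by (simp add: trace_map_def)

lemma trace_map_comp_commute:
  fixes A B :: "'a::euclidean_space \<Rightarrow> 'a"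
  assumes "linear A" "linear B"
  shows "trace_map (\<lambda>w. A (B w)) = trace_map (\<lambda>w. B (A w))"
proof -
  have "trace_map (\<lambda>w. A (B w)) = (\<Sum>b\<in>Basis. \<Sum>c\<in>Basis. (B b \<bullet> c) * (A c \<bullet> b))"
    unfolding trace_map_def
    by (intro sum.cong refl Linear_Algebra.linear_componentwise[OF assms(1)])
  also have "\<dots> = (\<Sum>c\<in>Basis. \<Sum>b\<in>Basis. (A c \<bullet> b) * (B b \<bullet> c))"
    by (subst sum.swap) (simp add: mult.commute)
  also have "\<dots> = trace_map (\<lambda>w. B (A w))"
    unfolding trace_map_def
    by (intro sum.cong refl Linear_Algebra.linear_componentwise[OF assms(2), symmetric])
  finally show ?thesis .
qed

lemma orthogonal_projection_onto_span:
  fixes S :: "'a::euclidean_space set"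
  obtains P where "linear P" "\<And>x. P x \<in> span S" "\<And>x. x \<in> span S \<Longrightarrow> P x = x"
    "trace_map P \<ge> 0"
proof -
  obtain T where T: "0 \<notin> T" "T \<subseteq> span S" "pairwise orthogonal T" "span T = span S"
    using orthogonal_basis_subspace[OF subspace_span[of S]] by metis
  define P where "P x = (\<Sum>b\<in>T. (b \<bullet> x / (b \<bullet> b)) *\<^sub>R b)" for x
  have "linear P"
    unfolding P_def
    by (rule linearI) (simp_all add: inner_add_right add_divide_distrib scaleR_add_left
        sum.distrib scaleR_sum_right)
  moreover have range: "P x \<in> span S" for x
    unfolding P_def using T(2) by (simp add: span_mul span_sum subsetD)
  moreover have "P x = x" if "x \<in> span S" for x
  proof -
    have "x - P x \<in> span T" using that range T(4) by (simp add: span_diff)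
    moreover have "orthogonal y (x - P x)" if "y \<in> span T" for y
      using Gram_Schmidt_step[OF T(3) that] unfolding P_def by simp
    ultimately have "orthogonal (x - P x) (x - P x)" by blast
    then show ?thesis by (simp add: orthogonal_def)
  qed
  moreover have "trace_map P = (\<Sum>c\<in>Basis. \<Sum>b\<in>T. (b \<bullet> c) * (b \<bullet> c) / (b \<bullet> b))"
    unfolding trace_map_def P_def by (simp add: inner_sum_left)
  then have "trace_map P \<ge> 0"
    by (simp add: sum_nonneg)
  ultimately show ?thesis using that by blast
qed

lemma trace_map_comp_projection_onto_range:
  fixes X P :: "'a::euclidean_space \<Rightarrow> 'a"
  assumes "linear X" "linear P" "\<And>x. x \<in> span (range X) \<Longrightarrow> P x = x"
  shows "trace_map X = trace_map (\<lambda>w. X (P w))"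
proof -
  have "trace_map X = trace_map (\<lambda>w. P (X w))"
    using assms(3) by (simp add: span_base)
  also have "\<dots> = trace_map (\<lambda>w. X (P w))"
    by (rule trace_map_comp_commute[OF assms(2,1)])
  finally show ?thesis .
qed

lemma trace_map_idempotent_nonneg:
  fixes E :: "'a::euclidean_space \<Rightarrow> 'a"
  assumes "linear E" "\<And>x. E (E x) = E x"
  shows "trace_map E \<ge> 0"
proof -
  obtain P where P: "linear P" "\<And>x. P x \<in> span (range E)"
    "\<And>x. x \<in> span (range E) \<Longrightarrow> P x = x" "trace_map P \<ge> 0"
    using orthogonal_projection_onto_span by blast
  have "E (P w) = id (P w)" for w
    by (rule real_vector.linear_eq_on_span[OF assms(1) linear_id _ P(2)]) (auto simp: assms(2))
  then show ?thesis
    using trace_map_comp_projection_onto_range[OF assms(1) P(1,3)] P(4) by simp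
qed

lemma trace_map_square_zero:
  fixes X :: "'a::euclidean_space \<Rightarrow> 'a"
  assumes "linear X" "\<And>x. X (X x) = 0"
  shows "trace_map X = 0"
proof -
  obtain P where P: "linear P" "\<And>x. P x \<in> span (range X)"
    "\<And>x. x \<in> span (range X) \<Longrightarrow> P x = x"
    using orthogonal_projection_onto_span by blast
  have "X (P w) = 0" for w
    by (rule real_vector.linear_eq_0_on_span[OF assms(1) _ P(2)]) (auto simp: assms(2))
  then show ?thesis
    using trace_map_comp_projection_onto_range[OF assms(1) P(1,3)] by (simp add: trace_map_zero)
qed

lemma trace_map_div_nonneg_if_comp_self_eq_scaleR:
  fixes A :: "'a::euclidean_space \<Rightarrow> 'a"
  assumes "linear A" "\<And>x. A (A x) = c *\<^sub>R A x" "c \<noteq> 0"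
  shows "trace_map A / c \<ge> 0"
proof -
  define E where "E x = (1 / c) *\<^sub>R A x" for x
  have "linear E"
    unfolding E_def using assms(1) by (simp add: linear_compose_scale_right)
  moreover have "E (E x) = E x" for x
    unfolding E_def using assms by (simp add: linear_scale)
  ultimately have "trace_map E \<ge> 0" by (rule trace_map_idempotent_nonneg)
  then show ?thesis
    unfolding E_def trace_map_scaleR by simp
qed

locale pseudo_euclidean_2step =
  fixes br :: "'a::euclidean_space \<Rightarrow> 'a \<Rightarrow> 'a" and g :: "'a \<Rightarrow> 'a \<Rightarrow> real"
  assumes bilinear_br: "bilinear br" and br_self: "\<And>u. br u u = 0"
    and bilinear_g: "bilinear g" and g_sym: "\<And>u v. g u v = g v u"
    and g_nondegenerate: "\<And>u. (\<forall>v. g u v = 0) \<Longrightarrow> u = 0"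
    and br_br_left [simp]: "\<And>u v w. br (br u v) w = 0"
begin

lemma linear_br_right: "linear (br u)" and linear_br_left: "linear (\<lambda>u. br u v)"
  using bilinear_br by (simp_all add: bilinear_def)

lemma linear_g_right: "linear (g u)" and linear_g_left: "linear (\<lambda>u. g u v)"
  using bilinear_g by (simp_all add: bilinear_def)

lemmas br_bilinear_simps [simp] =
  bilinear_ladd[OF bilinear_br] bilinear_radd[OF bilinear_br]
  bilinear_lsub[OF bilinear_br] bilinear_rsub[OF bilinear_br]
  bilinear_lmul[OF bilinear_br] bilinear_rmul[OF bilinear_br]
  bilinear_lneg[OF bilinear_br] bilinear_rneg[OF bilinear_br]
  bilinear_lzero[OF bilinear_br] bilinear_rzero[OF bilinear_br]

lemmas g_bilinear_simps [simp] =
  bilinear_ladd[OF bilinear_g] bilinear_radd[OF bilinear_g]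
  bilinear_lsub[OF bilinear_g] bilinear_rsub[OF bilinear_g]
  bilinear_lmul[OF bilinear_g] bilinear_rmul[OF bilinear_g]
  bilinear_lneg[OF bilinear_g] bilinear_rneg[OF bilinear_g]
  bilinear_lzero[OF bilinear_g] bilinear_rzero[OF bilinear_g]

lemma br_anticomm: "br u v = - br v u"
proof -
  have "0 = br (u + v) (u + v)" by (simp only: br_self)
  also have "\<dots> = br u v + br v u" using br_self[of u] br_self[of v] by simp
  finally show ?thesis by (simp add: eq_neg_iff_add_eq_0)
qed

lemma br_br_right [simp]: "br u (br v w) = 0"
  using br_anticomm[of u "br v w"] by simp

lemma g_eqI: assumes "\<And>w. g x w = g y w" shows "x = y"
  using g_nondegenerate[of "x - y"] assms by simp

lemma g_sum_right: "g v (sum f S) = (\<Sum>a\<in>S. g v (f a))"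
  using linear_sum[OF linear_g_right[of v], of f S] by simp

lemma g_eq_sum_Basis: "g x y = (\<Sum>b\<in>Basis. (x \<bullet> b) * g b y)"
proof -
  have "g x y = g (\<Sum>b\<in>Basis. (x \<bullet> b) *\<^sub>R b) y" by (simp only: euclidean_representation)
  then show ?thesis by (simp add: linear_sum[OF linear_g_left])
qed

definition flat :: "'a \<Rightarrow> 'a" where "flat x = (\<Sum>b\<in>Basis. g x b *\<^sub>R b)"

lemma g_eq_inner_flat: "g x y = flat x \<bullet> y"
proof -
  have "g x y = (\<Sum>b\<in>Basis. (y \<bullet> b) * g b x)"
    by (subst g_sym) (rule g_eq_sum_Basis)
  also have "\<dots> = flat x \<bullet> y"
    unfolding flat_def inner_sum_left by (intro sum.cong refl) (simp add: g_sym[of x] inner_commute)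
  finally show ?thesis .
qed

lemma flat_inner_commute: "flat x \<bullet> y = x \<bullet> flat y"
  using g_sym[of x y] by (simp add: g_eq_inner_flat inner_commute)

lemma linear_flat: "linear flat"
  by (rule linearI) (simp_all add: flat_def scaleR_add_left sum.distrib scaleR_sum_right)

lemma inj_flat: "inj flat"
  by (rule injI, rule g_eqI) (simp add: g_eq_inner_flat)

definition sharp :: "'a \<Rightarrow> 'a" where
  "sharp = (SOME h. linear h \<and> (\<forall>x. h (flat x) = x) \<and> (\<forall>x. flat (h x) = x))"

lemma linear_sharp: "linear sharp" and sharp_flat: "sharp (flat x) = x"
  and flat_sharp: "flat (sharp x) = x"
proof -
  have "linear sharp \<and> (\<forall>x. sharp (flat x) = x) \<and> (\<forall>x. flat (sharp x) = x)"
    using linear_injective_isomorphism[OF linear_flat inj_flat refl] unfolding sharp_def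
    by (rule someI_ex)
  then show "linear sharp" "sharp (flat x) = x" "flat (sharp x) = x" by auto
qed

lemma g_sharp_left [simp]: "g (sharp x) y = x \<bullet> y"
  by (simp add: g_eq_inner_flat flat_sharp)

lemma g_sharp_right [simp]: "g y (sharp x) = y \<bullet> x"
  by (simp add: g_sym[of y] inner_commute)

lemma trace_map_eq_if_g_adjoint:
  assumes "linear X" "linear Y" "\<And>a b. g (Y a) b = g a (X b)"
  shows "trace_map Y = trace_map X"
proof -
  have "trace_map Y = (\<Sum>b\<in>Basis. g (Y b) (sharp b))" by (simp add: trace_map_def)
  also have "\<dots> = trace_map (\<lambda>b. flat (X (sharp b)))"
  proof (unfold trace_map_def, intro sum.cong refl)
    fix b
    have "g (Y b) (sharp b) = flat b \<bullet> X (sharp b)" by (subst assms(3)) (rule g_eq_inner_flat)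
    then show "g (Y b) (sharp b) = flat (X (sharp b)) \<bullet> b"
      by (simp add: flat_inner_commute inner_commute)
  qed
  also have "\<dots> = trace_map (\<lambda>b. X (sharp (flat b)))"
    using trace_map_comp_commute[OF linear_flat linear_compose[OF linear_sharp assms(1)]]
    by (simp add: o_def)
  also have "\<dots> = trace_map X" by (simp add: sharp_flat)
  finally show ?thesis .
qed

definition jmap :: "'a \<Rightarrow> 'a \<Rightarrow> 'a" where "jmap u a = sharp (adjoint (br a) (flat u))"

lemma g_jmap_left [simp]: "g (jmap u a) b = g u (br a b)"
  using adjoint_works[OF linear_br_right, of b a "flat u"]
  by (simp add: jmap_def g_eq_inner_flat flat_sharp inner_commute)

lemma jmap_bilinear_simps [simp]:
  "jmap (x + y) z = jmap x z + jmap y z" "jmap z (x + y) = jmap z x + jmap z y"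
  "jmap (x - y) z = jmap x z - jmap y z" "jmap z (x - y) = jmap z x - jmap z y"
  "jmap (c *\<^sub>R x) z = c *\<^sub>R jmap x z" "jmap z (c *\<^sub>R x) = c *\<^sub>R jmap z x"
  "jmap (- x) z = - jmap x z" "jmap z (- x) = - jmap z x"
  "jmap 0 z = 0" "jmap z 0 = 0"
  by (rule g_eqI; simp)+

lemma linear_jmap_right: "linear (jmap u)" and linear_jmap_left: "linear (\<lambda>u. jmap u a)"
  by (rule linearI; simp)+

lemma jmap_br [simp]: "jmap u (br x y) = 0"
  by (rule g_eqI) simp

lemma jmap_jmap [simp]: "jmap (jmap a b) c = 0"
  by (rule g_eqI) simp

lemma jmap_central_right: "(\<And>b. br x b = 0) \<Longrightarrow> jmap a x = 0"
  by (rule g_eqI) simp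

lemma g_jmap_skew: "g (jmap u a) b = - g (jmap u b) a"
  by (simp add: br_anticomm[of a b])

lemma levi_civita_eq: "levi_civita br g u v = (1/2) *\<^sub>R (br u v - jmap v u - jmap u v)"
proof -
  have koszul: "2 * g ((1/2) *\<^sub>R (br u v - jmap v u - jmap u v)) w
      = g (br u v) w + g (br w u) v + g (br w v) u" for w
    by (simp add: g_sym[of v] g_sym[of u] br_anticomm[of w u] br_anticomm[of w v] algebra_simps)
  show ?thesis
    unfolding levi_civita_def
  proof (rule the_equality)
    fix x assume x: "\<forall>w. 2 * g x w = g (br u v) w + g (br w u) v + g (br w v) u"
    show "x = (1/2) *\<^sub>R (br u v - jmap v u - jmap u v)"
      using x koszul by (intro g_eqI) (metis mult_left_cancel zero_neq_numeral)
  qed (use koszul in blast)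
qed

lemma curvature_eq:
  fixes u v w :: 'a
  defines "x \<equiv> levi_civita br g u v"
  shows "curvature br g u w v = - (1/2) *\<^sub>R jmap (br u w) v
    + (1/4) *\<^sub>R (br u (jmap v w) + br u (jmap w v) + jmap (br w v) u
                  - jmap u (jmap v w) - jmap u (jmap w v))
    + (1/2) *\<^sub>R (br w x - jmap x w - jmap w x)"
  unfolding curvature_def Let_def x_def levi_civita_eq by (simp add: algebra_simps)

definition Q :: "'a \<Rightarrow> 'a \<Rightarrow> real" where "Q u v = trace_map (\<lambda>w. jmap (br u w) v)"

definition T :: "'a \<Rightarrow> 'a \<Rightarrow> real" where "T u v = trace_map (\<lambda>w. jmap u (jmap v w))"

lemma trace_br_right: "trace_map (br y) = 0"
  by (rule trace_map_square_zero[OF linear_br_right]) simp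

lemma trace_br_left: "trace_map (\<lambda>w. br w y) = 0"
  using trace_br_right[of y] by (simp add: br_anticomm[of _ y] trace_map_neg)

lemma trace_jmap_right: "trace_map (jmap y) = 0"
proof -
  have "trace_map (jmap y) = trace_map (\<lambda>b. - jmap y b)"
  proof (rule trace_map_eq_if_g_adjoint[OF linear_compose_neg[OF linear_jmap_right] linear_jmap_right])
    fix a b
    have "g (jmap y a) b = - g (jmap y b) a" by (rule g_jmap_skew)
    then show "g (jmap y a) b = g a (- jmap y b)" by (simp add: g_sym[of a])
  qed
  then show ?thesis by (simp add: trace_map_neg)
qed

lemma trace_jmap_left: "trace_map (\<lambda>w. jmap w y) = 0"
  using trace_map_eq_if_g_adjoint[OF linear_br_right linear_jmap_left] trace_br_right by simp

lemma trace_br_jmap_right: "trace_map (\<lambda>w. br u (jmap v w)) = 0"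
  using trace_map_comp_commute[OF linear_br_right linear_jmap_right, of u v]
  by (simp add: trace_map_zero)

lemma trace_br_jmap_left: "trace_map (\<lambda>w. br u (jmap w v)) = Q u v"
  using trace_map_comp_commute[OF linear_br_right linear_jmap_left, of u v] by (simp add: Q_def)

lemma trace_jmap_br_left: "trace_map (\<lambda>w. jmap (br w v) u) = - Q v u"
  by (simp add: br_anticomm[of _ v] trace_map_neg Q_def)

lemma trace_jmap_jmap_left: "trace_map (\<lambda>w. jmap u (jmap w v)) = 0"
proof -
  have "trace_map (\<lambda>w. jmap u (jmap w v)) = trace_map (\<lambda>b. - br v (jmap u b))"
  proof (rule trace_map_eq_if_g_adjoint)
    show "linear (\<lambda>b. - br v (jmap u b))" and "linear (\<lambda>w. jmap u (jmap w v))"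
      by (rule linearI; simp)+
    fix a b
    have "g (jmap u (jmap a v)) b = - g (jmap u b) (jmap a v)" by (rule g_jmap_skew)
    also have "\<dots> = - g (jmap a v) (jmap u b)" by (simp only: g_sym[of "jmap u b"])
    also have "\<dots> = g a (- br v (jmap u b))" by simp
    finally show "g (jmap u (jmap a v)) b = g a (- br v (jmap u b))" .
  qed
  then show ?thesis using trace_br_jmap_right[of v u] by (simp add: trace_map_neg)
qed

lemma ricci_eq: "ricci br g u v = - (1/4) * (Q u v + Q v u + T u v)"
proof -
  have "ricci br g u v = - (1/2) * Q u v + (1/4) * (0 + Q u v + - Q v u - T u v - 0)
      + (1/2) * (0 - 0 - 0)"
    unfolding ricci_def curvature_eq
    by (simp only: trace_map_add trace_map_diff trace_map_scaleR trace_br_left trace_jmap_right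
        trace_jmap_left trace_br_jmap_right trace_br_jmap_left trace_jmap_br_left
        trace_jmap_jmap_left flip: T_def Q_def)
  then show ?thesis by (simp add: algebra_simps)
qed

lemma Q_sym: "Q u v = Q v u"
  unfolding Q_def
proof (rule trace_map_eq_if_g_adjoint)
  show "linear (\<lambda>w. jmap (br v w) u)" and "linear (\<lambda>w. jmap (br u w) v)"
    by (rule linearI; simp)+
  show "g (jmap (br u a) v) b = g a (jmap (br v b) u)" for a b
    by (simp add: g_sym[of a] g_sym[of "br u a"])
qed

definition Omega :: "'a \<Rightarrow> 'a" where "Omega u = (\<Sum>c\<in>Basis. br c (jmap u (sharp c)))"

lemma linear_Omega: "linear Omega"
  by (rule linearI) (simp_all add: Omega_def sum.distrib scaleR_sum_right)

lemma br_Omega_left [simp]: "br (Omega u) w = 0"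
  using linear_sum[OF linear_br_left[of w], of "\<lambda>c. br c (jmap u (sharp c))" Basis]
  by (simp add: Omega_def)

lemma g_Omega_left: "g (Omega u) v = - T u v"
proof -
  have "T u v = (\<Sum>c\<in>Basis. g (jmap u (jmap v c)) (sharp c))"
    by (simp add: T_def trace_map_def)
  also have "\<dots> = (\<Sum>c\<in>Basis. - g v (br c (jmap u (sharp c))))"
  proof (intro sum.cong refl)
    fix c
    have "g (jmap u (jmap v c)) (sharp c) = - g (jmap u (sharp c)) (jmap v c)" by (rule g_jmap_skew)
    also have "\<dots> = - g (jmap v c) (jmap u (sharp c))" by (simp only: g_sym[of "jmap u _"])
    also have "\<dots> = - g v (br c (jmap u (sharp c)))" by (simp only: g_jmap_left)
    finally show "g (jmap u (jmap v c)) (sharp c) = - g v (br c (jmap u (sharp c)))" .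
  qed
  also have "\<dots> = - g v (Omega u)" by (simp add: Omega_def g_sum_right sum_negf)
  finally show ?thesis by (simp add: g_sym)
qed

lemma Q_Omega_left: "Q (Omega x) v = 0"
  by (simp add: Q_def trace_map_zero)

lemma Q_Omega_right: "Q v (Omega x) = 0"
  by (simp add: Q_def jmap_central_right trace_map_zero)

lemma ricci_Omega_left: "ricci br g (Omega x) v = (1/4) * g (Omega (Omega x)) v"
  by (simp add: ricci_eq Q_Omega_left Q_Omega_right g_Omega_left)

lemma sum_T_sharp: "(\<Sum>b\<in>Basis. T b (sharp b)) = - trace_map Omega"
  using g_Omega_left[of _ "sharp _"] by (simp add: trace_map_def sum_negf)

lemma Q_eq_sum_Basis: "Q u v = (\<Sum>c\<in>Basis. g (br u c) (br v (sharp c)))"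
  unfolding Q_def trace_map_def by (intro sum.cong refl) (metis g_sharp_right g_jmap_left)

lemma trace_Omega_eq:
  "trace_map Omega = (\<Sum>c\<in>Basis. \<Sum>d\<in>Basis. g (br c d) (br (sharp c) (sharp d)))"
proof -
  have entry: "br c (jmap b (sharp c)) \<bullet> b
      = (\<Sum>d\<in>Basis. (br c d \<bullet> b) * g b (br (sharp c) (sharp d)))" for b c
  proof -
    have "br c (jmap b (sharp c)) \<bullet> b = g (jmap b (sharp c)) (jmap (sharp b) c)"
      by (metis g_sharp_right g_sym g_jmap_left)
    also have "\<dots> = (\<Sum>d\<in>Basis. (jmap b (sharp c) \<bullet> d) * g d (jmap (sharp b) c))"
      by (rule g_eq_sum_Basis)
    also have "\<dots> = (\<Sum>d\<in>Basis. (br c d \<bullet> b) * g b (br (sharp c) (sharp d)))"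
    proof (intro sum.cong refl)
      fix d
      have "jmap b (sharp c) \<bullet> d = g b (br (sharp c) (sharp d))"
        by (metis g_sharp_right g_jmap_left)
      moreover have "g d (jmap (sharp b) c) = br c d \<bullet> b"
        by (subst g_sym) (simp add: inner_commute)
      ultimately show "(jmap b (sharp c) \<bullet> d) * g d (jmap (sharp b) c)
          = (br c d \<bullet> b) * g b (br (sharp c) (sharp d))" by simp
    qed
    finally show ?thesis .
  qed
  have "trace_map Omega = (\<Sum>b\<in>Basis. \<Sum>c\<in>Basis. br c (jmap b (sharp c)) \<bullet> b)"
    by (simp add: trace_map_def Omega_def inner_sum_left)
  also have "\<dots> = (\<Sum>b\<in>Basis. \<Sum>c\<in>Basis. \<Sum>d\<in>Basis.
      (br c d \<bullet> b) * g b (br (sharp c) (sharp d)))"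
    by (simp only: entry)
  also have "\<dots> = (\<Sum>c\<in>Basis. \<Sum>d\<in>Basis. \<Sum>b\<in>Basis.
      (br c d \<bullet> b) * g b (br (sharp c) (sharp d)))"
    by (subst sum.swap, rule sum.cong[OF refl], rule sum.swap)
  also have "\<dots> = (\<Sum>c\<in>Basis. \<Sum>d\<in>Basis. g (br c d) (br (sharp c) (sharp d)))"
    by (simp only: g_eq_sum_Basis[symmetric])
  finally show ?thesis .
qed

lemma sum_Q_sharp: "(\<Sum>b\<in>Basis. Q b (sharp b)) = trace_map Omega"
  by (simp add: Q_eq_sum_Basis trace_Omega_eq)

lemma sum_ricci_sharp: "(\<Sum>b\<in>Basis. ricci br g b (sharp b)) = - (1/4) * trace_map Omega"
proof -
  have "ricci br g b (sharp b) = - (1/4) * (2 * Q b (sharp b) + T b (sharp b))" for b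
    using Q_sym[of "sharp b" b] by (simp add: ricci_eq)
  then have "(\<Sum>b\<in>Basis. ricci br g b (sharp b))
      = - (1/4) * (2 * (\<Sum>b\<in>Basis. Q b (sharp b)) + (\<Sum>b\<in>Basis. T b (sharp b)))"
    by (simp only: sum.distrib flip: sum_distrib_left)
  then show ?thesis by (simp add: sum_Q_sharp sum_T_sharp)
qed

lemma Omega_comp_Omega_if_einstein:
  assumes "\<forall>u v. ricci br g u v = lam * g u v"
  shows "Omega (Omega x) = (4 * lam) *\<^sub>R Omega x"
proof (rule g_eqI)
  fix v
  have "(1/4) * g (Omega (Omega x)) v = lam * g (Omega x) v"
    using assms ricci_Omega_left by metis
  then show "g (Omega (Omega x)) v = g ((4 * lam) *\<^sub>R Omega x) v" by simp
qed

lemma trace_Omega_if_einstein: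
  assumes "\<forall>u v. ricci br g u v = lam * g u v"
  shows "trace_map Omega = - (4 * lam) * real DIM('a)"
proof -
  have "(\<Sum>b\<in>Basis. ricci br g b (sharp b)) = lam * real DIM('a)"
    using assms by simp
  then show ?thesis using sum_ricci_sharp by simp
qed

end

theorem mainTheorem6:
  fixes br :: "'a::euclidean_space \<Rightarrow> 'a \<Rightarrow> 'a" and g :: "'a \<Rightarrow> 'a \<Rightarrow> real" and lam :: real
  assumes "lie_algebra br"
    and "pseudo_euclidean_form g"
    and "two_step_nilpotent br"
    and "\<forall>u v. ricci br g u v = lam * g u v"
  shows "lam = 0"
proof -
  interpret pseudo_euclidean_2step br g
    using assms(1-3)
    by unfold_locales (auto simp: lie_algebra_def pseudo_euclidean_form_def
        two_step_nilpotent_def center_def)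
  show ?thesis
  proof (rule ccontr)
    assume "lam \<noteq> 0"
    then have "trace_map Omega / (4 * lam) \<ge> 0"
      by (intro trace_map_div_nonneg_if_comp_self_eq_scaleR linear_Omega
          Omega_comp_Omega_if_einstein[OF assms(4)]) simp
    also have "trace_map Omega / (4 * lam) = - real DIM('a)"
      using trace_Omega_if_einstein[OF assms(4)] \<open>lam \<noteq> 0\<close> by simp
    finally show False by simp
  qed
qed

end
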